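(* Let $\gamma:\mathbb{Z}_{>0}\to(0,\infty)$ satisfy $\lim_{n\to\infty}\gamma(n)=0$, and let $\delta>0$, $\theta>0$. Consider the birth–death continuous-time Markov chain on $\mathbb{Z}_{\ge0}$ with transitions $0\to1$ at rate $\theta$, $n\to n+1$ at rate $n\gamma(n)$ for $n\ge1$, and $n\to n-1$ at rate $n\delta$ for $n\ge1$, and for $n\ge1$ let $T_n$ be the first hitting time of $0$ from $n$. Then for every $\epsilon\in(0,\delta)$ there is a constant $h(\epsilon)$, independent of $n$, such that for all $n\ge1$, $$\frac{\ln(n+1)}{\delta}\le\mathbb{E}[T_n]\le\frac{\ln n}{\delta-\epsilon}+h(\epsilon).$$ *)

theory Defs
  imports "HOL-Analysis.Analysis"
begin

text \<open>Birth-death continuous-time Markov chain on the naturals, given by birth rates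
  up x (x to x+1) and death rates down x (x to x-1).  The CTMC is realised, as usual,
  by its jump chain together with exponential holding times of rate q(x) = up x + down x.
  A trajectory from n until the first visit to 0 is a finite list of states; its
  probability is the product of jump probabilities, and the conditional expected
  duration given the jump path is the sum of the mean holding times 1/q(x).\<close>

definition jump_prob :: "(nat \<Rightarrow> real) \<Rightarrow> (nat \<Rightarrow> real) \<Rightarrow> nat \<Rightarrow> nat \<Rightarrow> real" where
  "jump_prob up down x y =
     (if y = Suc x then up x / (up x + down x)
      else if Suc y = x then down x / (up x + down x) else 0)"

definition hit_paths :: "nat \<Rightarrow> nat list set" where
  "hit_paths n = {xs. xs \<noteq> [] \<and> hd xs = n \<and> last xs = 0 \<and>
                      (\<forall>i < length xs - 1. xs ! i \<noteq> 0)}"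

definition path_prob :: "(nat \<Rightarrow> real) \<Rightarrow> (nat \<Rightarrow> real) \<Rightarrow> nat list \<Rightarrow> real" where
  "path_prob up down xs = (\<Prod>i < length xs - 1. jump_prob up down (xs ! i) (xs ! Suc i))"

definition path_time :: "(nat \<Rightarrow> real) \<Rightarrow> (nat \<Rightarrow> real) \<Rightarrow> nat list \<Rightarrow> real" where
  "path_time up down xs = (\<Sum>i < length xs - 1. 1 / (up (xs ! i) + down (xs ! i)))"

definition hit_prob :: "(nat \<Rightarrow> real) \<Rightarrow> (nat \<Rightarrow> real) \<Rightarrow> nat \<Rightarrow> ennreal" where
  "hit_prob up down n =
     (\<integral>\<^sup>+ xs. ennreal (path_prob up down xs) * indicator (hit_paths n) xs \<partial>count_space UNIV)"

text \<open>Expected first hitting time of 0 from n (value \<infinity> if 0 is not hit a.s.).\<close>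
definition exp_hit_time :: "(nat \<Rightarrow> real) \<Rightarrow> (nat \<Rightarrow> real) \<Rightarrow> nat \<Rightarrow> ennreal" where
  "exp_hit_time up down n =
     (\<integral>\<^sup>+ xs. ennreal (path_prob up down xs * path_time up down xs) * indicator (hit_paths n) xs
        \<partial>count_space UNIV)
     + top * (1 - hit_prob up down n)"

definition bd_up :: "real \<Rightarrow> (nat \<Rightarrow> real) \<Rightarrow> nat \<Rightarrow> real" where
  "bd_up \<theta> \<gamma> x = (if x = 0 then \<theta> else real x * \<gamma> x)"

definition bd_down :: "real \<Rightarrow> nat \<Rightarrow> real" where
  "bd_down \<delta> x = real x * \<delta>"

end

(* First-step analysis shows that the hitting probability p and the mean hitting time m of 0 solve
     n\<gamma>(n) (f(n+1) - f(n)) + n\<delta> (f(n-1) - f(n)) = -c   (n \<ge> 1)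
   with c = 0, p(0) = 1 for p and c = 1, m(0) = 0 for m.  For the increments D this implies
   \<gamma>(n+1) D(n+1) \<le> \<delta> D(n).  A negative increment would therefore persist and, once \<gamma> \<le> \<delta>,
   stop shrinking, so f would decrease linearly; since p, m \<ge> 0, both are nondecreasing.  Hence
   p = 1 (as p \<le> 1 = p(0)), and \<delta> (m(n+1) - m(n)) \<ge> 1/(n+1) gives m(n) \<ge> H(n)/\<delta> \<ge> ln(n+1)/\<delta>.
   For the upper bound, any U \<ge> 0 with drift 1 + n\<gamma>(n) (U(n+1) - U(n)) + n\<delta> (U(n-1) - U(n)) \<le> 0
   dominates m (induction on the length of the paths).  Where \<gamma> \<le> \<epsilon> the increments
   1/(n (\<delta> - \<epsilon>)) have this drift, which yields U(n) \<le> C + H(n)/(\<delta> - \<epsilon>) \<le> ln n/(\<delta> - \<epsilon>) + h. *)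

theory Submission
  imports Defs
begin

lemma harm_le_ln_plus_1: "1 \<le> n \<Longrightarrow> harm n \<le> ln (real n) + 1"
  using euler_mascheroni_sequence_decreasing[of 1 n] by (simp add: harm_def)

lemma enn2real_linear_combination:
  assumes "0 \<le> a" "0 \<le> b" "X < top" "Y < top"
  shows "enn2real (ennreal a * X + ennreal b * Y) = a * enn2real X + b * enn2real Y"
  using assms by (simp add: enn2real_plus enn2real_mult ennreal_mult_less_top)

lemma indicator_atMost_Suc_comp: "(indicator {..Suc L} \<circ> Suc :: nat \<Rightarrow> ennreal) = indicator {..L}"
  by (auto simp: fun_eq_iff indicator_def)

lemma nn_integral_SUP_length_atMost:
  fixes g h :: "nat list \<Rightarrow> ennreal"
  shows "(\<integral>\<^sup>+xs. g xs * h xs \<partial>count_space UNIV)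
       = (SUP L. \<integral>\<^sup>+xs. g xs * indicator {..L} (length xs) * h xs \<partial>count_space UNIV)"
proof -
  have "g xs * h xs = (SUP L. g xs * indicator {..L} (length xs) * h xs)" for xs
  proof (rule antisym)
    show "g xs * h xs \<le> (SUP L. g xs * indicator {..L} (length xs) * h xs)"
      by (rule SUP_upper2[of "length xs"]) auto
    show "(SUP L. g xs * indicator {..L} (length xs) * h xs) \<le> g xs * h xs"
      by (rule SUP_least) (auto simp: indicator_def)
  qed
  then have "(\<integral>\<^sup>+xs. g xs * h xs \<partial>count_space UNIV)
      = (\<integral>\<^sup>+xs. (SUP L. g xs * indicator {..L} (length xs) * h xs) \<partial>count_space UNIV)"
    by simp
  also have "\<dots> = (SUP L. \<integral>\<^sup>+xs. g xs * indicator {..L} (length xs) * h xs \<partial>count_space UNIV)"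
    by (rule nn_integral_monotone_convergence_SUP)
       (auto simp: incseq_def le_fun_def indicator_def intro!: mult_right_mono)
  finally show ?thesis .
qed

lemma linear_decrease_not_bdd_below:
  fixes F :: "nat \<Rightarrow> real"
  assumes "c < 0" and "\<And>x. M \<le> x \<Longrightarrow> F (Suc x) - F x \<le> c"
  shows "\<exists>x. F x < B"
proof -
  have lin: "F (M + K) \<le> F M + real K * c" for K
  proof (induction K)
    case (Suc K)
    then show ?case using assms(2)[of "M + K"] by (simp add: algebra_simps)
  qed simp
  obtain K :: nat where "F M - B < real K * (- c)"
    using ex_less_of_nat_mult[of "- c"] assms(1) by auto
  then show ?thesis
    using lin[of K] by (intro exI[of _ "M + K"]) (simp add: algebra_simps)
qed

lemma incseq_if_bdd_below_recurrence:
  fixes F g :: "nat \<Rightarrow> real"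
  assumes g_pos: "\<And>x. 0 < g (Suc x)" and g_le: "eventually (\<lambda>x. g x \<le> d) sequentially"
    and rec: "\<And>x. g (Suc x) * (F (Suc (Suc x)) - F (Suc x)) \<le> d * (F (Suc x) - F x)"
    and bdd: "\<And>x. B \<le> F x"
  shows "incseq F"
proof (rule incseq_SucI, rule ccontr)
  fix m
  assume decrease: "\<not> F m \<le> F (Suc m)"
  define D where "D x = F (Suc x) - F x" for x
  obtain N where N: "\<And>x. N \<le> x \<Longrightarrow> g x \<le> d"
    using g_le by (auto simp: eventually_sequentially)
  have "0 < d"
    using g_pos[of N] N[of "Suc N"] by simp
  have rec_D: "g (Suc x) * D (Suc x) \<le> d * D x" for x
    using rec unfolding D_def .
  have D_neg: "D x < 0" if "m \<le> x" for x
    using that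
  proof (induction rule: dec_induct)
    case base
    then show ?case using decrease by (simp add: D_def)
  next
    case (step x)
    have "d * D x < 0" using \<open>0 < d\<close> step.IH by (rule mult_pos_neg)
    with rec_D[of x] have "g (Suc x) * D (Suc x) < 0" by linarith
    then show ?case using g_pos[of x] by (simp add: mult_less_0_iff)
  qed
  define M where "M = max m N"
  have D_decr: "D (Suc x) \<le> D x" if "M \<le> x" for x
  proof -
    have "d * D (Suc x) \<le> g (Suc x) * D (Suc x)"
      using N[of "Suc x"] D_neg[of "Suc x"] that by (intro mult_right_mono_neg) (auto simp: M_def)
    also have "\<dots> \<le> d * D x" by (rule rec_D)
    finally show ?thesis using \<open>0 < d\<close> by simp
  qed
  have "D x \<le> D M" if "M \<le> x" for x
    using that by (induction rule: dec_induct) (auto intro: order_trans D_decr)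
  moreover have "D M < 0" using D_neg by (simp add: M_def)
  ultimately obtain x where "F x < B"
    using linear_decrease_not_bdd_below[of "D M" M F B] by (auto simp: D_def)
  with bdd show False by (simp add: not_less[symmetric])
qed

section \<open>Hitting paths\<close>

lemma hit_paths_0: "hit_paths 0 = {[0]}"
  by (auto simp: hit_paths_def neq_Nil_conv nth_Cons split: nat.splits)

lemma hit_paths_hd: "ys \<in> hit_paths y \<Longrightarrow> ys \<noteq> [] \<and> hd ys = y"
  by (simp add: hit_paths_def)

lemma hit_paths_iff_hd: "ys \<in> hit_paths y \<longleftrightarrow> ys \<in> hit_paths (hd ys) \<and> hd ys = y"
  by (auto simp: hit_paths_def)

lemma Cons_in_hit_paths_iff:
  "x \<noteq> 0 \<Longrightarrow> x # ys \<in> hit_paths x \<longleftrightarrow> ys \<in> hit_paths (hd ys)"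
  by (cases ys) (auto simp: hit_paths_def nth_Cons split: nat.splits)

lemma path_prob_Cons:
  "ys \<noteq> [] \<Longrightarrow> path_prob up down (x # ys) = jump_prob up down x (hd ys) * path_prob up down ys"
  unfolding path_prob_def
  by (cases ys) (simp_all add: prod.lessThan_Suc_shift del: prod.lessThan_Suc)

lemma path_time_Cons:
  "ys \<noteq> [] \<Longrightarrow> path_time up down (x # ys) = 1 / (up x + down x) + path_time up down ys"
  unfolding path_time_def
  by (cases ys) (simp_all add: sum.lessThan_Suc_shift del: sum.lessThan_Suc)

lemma nn_integral_hit_paths_first_step:
  fixes f :: "nat list \<Rightarrow> ennreal"
  assumes "x \<noteq> 0"
    and "\<And>ys. ys \<in> hit_paths (hd ys) \<Longrightarrow> hd ys \<notin> {Suc x, x - 1} \<Longrightarrow> f (x # ys) = 0"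
  shows "(\<integral>\<^sup>+xs. f xs * indicator (hit_paths x) xs \<partial>count_space UNIV) =
           (\<integral>\<^sup>+ys. f (x # ys) * indicator (hit_paths (Suc x)) ys \<partial>count_space UNIV)
         + (\<integral>\<^sup>+ys. f (x # ys) * indicator (hit_paths (x - 1)) ys \<partial>count_space UNIV)"
proof -
  let ?g = "\<lambda>xs. f xs * indicator (hit_paths x) xs"
  have "(\<integral>\<^sup>+xs. ?g xs \<partial>count_space UNIV) = (\<integral>\<^sup>+xs. ?g xs \<partial>count_space (range (Cons x)))"
    by (intro nn_integral_count_space_eq) (auto simp: indicator_def dest!: hit_paths_hd simp: neq_Nil_conv)
  also have "\<dots> = (\<integral>\<^sup>+ys. ?g (x # ys) \<partial>count_space UNIV)"
    by (rule nn_integral_bij_count_space[symmetric]) (auto simp: bij_betw_def)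
  also have "\<dots> = (\<integral>\<^sup>+ys. f (x # ys) * indicator (hit_paths (Suc x)) ys
                        + f (x # ys) * indicator (hit_paths (x - 1)) ys \<partial>count_space UNIV)"
  proof (rule nn_integral_cong)
    fix ys
    show "?g (x # ys) = f (x # ys) * indicator (hit_paths (Suc x)) ys
                        + f (x # ys) * indicator (hit_paths (x - 1)) ys"
    proof (cases "ys \<in> hit_paths (hd ys)")
      case True
      then have "x # ys \<in> hit_paths x"
        and "ys \<in> hit_paths (Suc x) \<longleftrightarrow> hd ys = Suc x" "ys \<in> hit_paths (x - 1) \<longleftrightarrow> hd ys = x - 1"
        using Cons_in_hit_paths_iff[OF assms(1)] hit_paths_iff_hd by blast+
      with assms(2)[OF True] show ?thesis
        by (cases "hd ys = Suc x"; cases "hd ys = x - 1") auto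
    next
      case False
      then have "x # ys \<notin> hit_paths x" "ys \<notin> hit_paths (Suc x)" "ys \<notin> hit_paths (x - 1)"
        using Cons_in_hit_paths_iff[OF assms(1)] hit_paths_iff_hd by blast+
      then show ?thesis by simp
    qed
  qed
  finally show ?thesis
    by (simp add: nn_integral_add)
qed

section \<open>First-step analysis for birth-death chains\<close>

locale birth_death_rates =
  fixes up down :: "nat \<Rightarrow> real"
  assumes up_nonneg: "0 \<le> up x" and down_nonneg: "0 \<le> down x"
begin

lemma jump_prob_nonneg: "0 \<le> jump_prob up down x y"
  using up_nonneg down_nonneg by (simp add: jump_prob_def)

lemma path_prob_nonneg: "0 \<le> path_prob up down xs"
  by (simp add: path_prob_def prod_nonneg jump_prob_nonneg)

lemma path_time_nonneg: "0 \<le> path_time up down xs"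
  using up_nonneg down_nonneg by (simp add: path_time_def sum_nonneg)

lemma jump_prob_other: "y \<noteq> Suc x \<Longrightarrow> Suc y \<noteq> x \<Longrightarrow> jump_prob up down x y = 0"
  by (simp add: jump_prob_def)

lemma jump_prob_sum_le_1: "x \<noteq> 0 \<Longrightarrow> jump_prob up down x (Suc x) + jump_prob up down x (x - 1) \<le> 1"
  using up_nonneg[of x] down_nonneg[of x]
  by (auto simp: jump_prob_def add_divide_distrib[symmetric] divide_le_eq_1)

lemma jump_prob_drift:
  assumes "x \<noteq> 0" and "0 < up x + down x"
  shows "jump_prob up down x (Suc x) * (t + U (Suc x)) + jump_prob up down x (x - 1) * (t + U (x - 1))
       = U x + (t * (up x + down x) + up x * (U (Suc x) - U x) + down x * (U (x - 1) - U x))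
               / (up x + down x)"
proof -
  have "x - 1 \<noteq> Suc x" "Suc (x - 1) = x" using assms(1) by auto
  then have jp: "jump_prob up down x (Suc x) = up x / (up x + down x)"
    "jump_prob up down x (x - 1) = down x / (up x + down x)"
    by (simp_all add: jump_prob_def)
  have "up x + down x \<noteq> 0" using assms(2) by simp
  then show ?thesis
    unfolding jp by (simp add: divide_simps) (simp add: algebra_simps)
qed

lemma path_prob_Cons_eq_0:
  assumes "ys \<in> hit_paths (hd ys)" "hd ys \<notin> {Suc x, x - 1}" "x \<noteq> 0"
  shows "path_prob up down (x # ys) = 0"
  using assms by (auto simp: path_prob_Cons jump_prob_other dest: hit_paths_hd)

text \<open>Weights on the path length make truncation to paths of length at most L possible; on
  truncated sums first-step analysis can be iterated by induction on L.\<close>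

definition weighted_hit_prob :: "(nat \<Rightarrow> ennreal) \<Rightarrow> nat \<Rightarrow> ennreal" where
  "weighted_hit_prob w x = (\<integral>\<^sup>+xs. ennreal (path_prob up down xs) * w (length xs)
                                   * indicator (hit_paths x) xs \<partial>count_space UNIV)"

definition weighted_hit_time :: "(nat \<Rightarrow> ennreal) \<Rightarrow> nat \<Rightarrow> ennreal" where
  "weighted_hit_time w x = (\<integral>\<^sup>+xs. ennreal (path_prob up down xs * path_time up down xs) * w (length xs)
                                   * indicator (hit_paths x) xs \<partial>count_space UNIV)"

lemma weighted_hit_prob_0: "weighted_hit_prob w 0 = w 1"
  by (simp add: weighted_hit_prob_def hit_paths_0 path_prob_def)

lemma weighted_hit_time_0: "weighted_hit_time w 0 = 0"
  by (simp add: weighted_hit_time_def hit_paths_0 path_time_def)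

lemma weighted_hit_prob_step:
  assumes "x \<noteq> 0"
  shows "weighted_hit_prob w x =
           ennreal (jump_prob up down x (Suc x)) * weighted_hit_prob (w \<circ> Suc) (Suc x)
         + ennreal (jump_prob up down x (x - 1)) * weighted_hit_prob (w \<circ> Suc) (x - 1)"
proof -
  have integrand_Cons: "ennreal (path_prob up down (x # ys)) * w (length (x # ys)) * indicator (hit_paths y) ys
      = ennreal (jump_prob up down x y) * (ennreal (path_prob up down ys) * (w \<circ> Suc) (length ys)
          * indicator (hit_paths y) ys)" for y ys
    by (cases "ys \<in> hit_paths y")
       (auto simp: path_prob_Cons ennreal_mult jump_prob_nonneg path_prob_nonneg mult.assoc
             dest: hit_paths_hd)
  show ?thesis
    unfolding weighted_hit_prob_def
    by (subst nn_integral_hit_paths_first_step[OF assms])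
       (simp add: path_prob_Cons_eq_0[OF _ _ assms], simp only: integrand_Cons, simp add: nn_integral_cmult)
qed

lemma weighted_hit_time_step:
  assumes "x \<noteq> 0"
  shows "weighted_hit_time w x =
           ennreal (jump_prob up down x (Suc x)) * (ennreal (1 / (up x + down x))
              * weighted_hit_prob (w \<circ> Suc) (Suc x) + weighted_hit_time (w \<circ> Suc) (Suc x))
         + ennreal (jump_prob up down x (x - 1)) * (ennreal (1 / (up x + down x))
              * weighted_hit_prob (w \<circ> Suc) (x - 1) + weighted_hit_time (w \<circ> Suc) (x - 1))"
proof -
  let ?c = "1 / (up x + down x)"
  have "0 \<le> ?c" using up_nonneg down_nonneg by simp
  then have integrand_Cons: "ennreal (path_prob up down (x # ys) * path_time up down (x # ys)) * w (length (x # ys))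
        * indicator (hit_paths y) ys
      = ennreal (jump_prob up down x y) *
          (ennreal ?c * (ennreal (path_prob up down ys) * (w \<circ> Suc) (length ys) * indicator (hit_paths y) ys)
         + ennreal (path_prob up down ys * path_time up down ys) * (w \<circ> Suc) (length ys)
             * indicator (hit_paths y) ys)" for y ys
    by (cases "ys \<in> hit_paths y")
       (auto simp: path_prob_Cons path_time_Cons ennreal_mult ennreal_mult' ennreal_plus
             jump_prob_nonneg path_prob_nonneg path_time_nonneg algebra_simps dest: hit_paths_hd)
  show ?thesis
    unfolding weighted_hit_prob_def weighted_hit_time_def
    by (subst nn_integral_hit_paths_first_step[OF assms])
       (simp add: path_prob_Cons_eq_0[OF _ _ assms], simp only: integrand_Cons,
        simp add: nn_integral_cmult nn_integral_add)
qed

lemma weighted_hit_prob_atMost_0: "weighted_hit_prob (indicator {..0}) x = 0"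
  unfolding weighted_hit_prob_def
  by (subst nn_integral_cong[where v="\<lambda>_. 0"]) (auto simp: indicator_def dest!: hit_paths_hd)

lemma weighted_hit_time_atMost_0: "weighted_hit_time (indicator {..0}) x = 0"
  unfolding weighted_hit_time_def
  by (subst nn_integral_cong[where v="\<lambda>_. 0"]) (auto simp: indicator_def dest!: hit_paths_hd)

lemma weighted_hit_prob_atMost_le_1: "weighted_hit_prob (indicator {..L}) x \<le> 1"
proof (induction L arbitrary: x)
  case 0
  show ?case unfolding weighted_hit_prob_atMost_0 by simp
next
  case (Suc L)
  show ?case
  proof (cases "x = 0")
    case True
    then show ?thesis by (simp add: weighted_hit_prob_0)
  next
    case False
    let ?a = "jump_prob up down x (Suc x)" and ?b = "jump_prob up down x (x - 1)"
    have "weighted_hit_prob (indicator {..Suc L}) x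
        = ennreal ?a * weighted_hit_prob (indicator {..L}) (Suc x)
          + ennreal ?b * weighted_hit_prob (indicator {..L}) (x - 1)"
      by (simp add: weighted_hit_prob_step[OF False] indicator_atMost_Suc_comp)
    also have "\<dots> \<le> ennreal ?a * 1 + ennreal ?b * 1"
      using Suc.IH by (intro add_mono mult_left_mono) auto
    also have "\<dots> = ennreal (?a + ?b)"
      by (simp add: ennreal_plus jump_prob_nonneg)
    also have "\<dots> \<le> 1"
      using jump_prob_sum_le_1[OF False] by simp
    finally show ?thesis .
  qed
qed

lemma weighted_hit_time_atMost_le_Lyapunov:
  assumes U_nonneg: "\<And>y. 0 \<le> U y"
    and drift: "\<And>y. y \<noteq> 0 \<Longrightarrow> 1 + up y * (U (Suc y) - U y) + down y * (U (y - 1) - U y) \<le> 0"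
  shows "weighted_hit_time (indicator {..L}) x \<le> ennreal (U x)"
proof (induction L arbitrary: x)
  case 0
  show ?case unfolding weighted_hit_time_atMost_0 by simp
next
  case (Suc L)
  show ?case
  proof (cases "x = 0")
    case True
    then show ?thesis by (simp add: weighted_hit_time_0)
  next
    case False
    let ?a = "jump_prob up down x (Suc x)" and ?b = "jump_prob up down x (x - 1)"
    let ?c = "1 / (up x + down x)"
    have q_pos: "0 < up x + down x"
      using drift[OF False] up_nonneg[of x] down_nonneg[of x]
      by (cases "up x = 0"; cases "down x = 0") auto
    have "weighted_hit_time (indicator {..Suc L}) x
        = ennreal ?a * (ennreal ?c * weighted_hit_prob (indicator {..L}) (Suc x)
                        + weighted_hit_time (indicator {..L}) (Suc x))
        + ennreal ?b * (ennreal ?c * weighted_hit_prob (indicator {..L}) (x - 1)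
                        + weighted_hit_time (indicator {..L}) (x - 1))"
      by (simp add: weighted_hit_time_step[OF False] indicator_atMost_Suc_comp)
    also have "\<dots> \<le> ennreal ?a * (ennreal ?c * 1 + ennreal (U (Suc x)))
                    + ennreal ?b * (ennreal ?c * 1 + ennreal (U (x - 1)))"
      using Suc.IH weighted_hit_prob_atMost_le_1
      by (intro add_mono mult_left_mono) auto
    also have "\<dots> = ennreal (?a * (?c + U (Suc x)) + ?b * (?c + U (x - 1)))"
      using q_pos U_nonneg by (simp add: ennreal_plus ennreal_mult jump_prob_nonneg)
    also have "\<dots> \<le> ennreal (U x)"
    proof (rule ennreal_leI)
      have "?a * (?c + U (Suc x)) + ?b * (?c + U (x - 1))
          = U x + (1 + up x * (U (Suc x) - U x) + down x * (U (x - 1) - U x)) / (up x + down x)"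
        using jump_prob_drift[OF False q_pos] q_pos by simp
      also have "\<dots> \<le> U x"
        using drift[OF False] q_pos by (simp add: divide_nonpos_pos)
      finally show "?a * (?c + U (Suc x)) + ?b * (?c + U (x - 1)) \<le> U x" .
    qed
    finally show ?thesis .
  qed
qed

lemma hit_prob_eq_weighted: "hit_prob up down = weighted_hit_prob (\<lambda>_. 1)"
  by (simp add: fun_eq_iff hit_prob_def weighted_hit_prob_def)

lemma hit_prob_eq_SUP: "hit_prob up down x = (SUP L. weighted_hit_prob (indicator {..L}) x)"
  unfolding hit_prob_def weighted_hit_prob_def by (rule nn_integral_SUP_length_atMost)

lemma exp_hit_time_eq_SUP:
  "exp_hit_time up down x = (SUP L. weighted_hit_time (indicator {..L}) x) + top * (1 - hit_prob up down x)"
  unfolding exp_hit_time_def weighted_hit_time_def by (subst nn_integral_SUP_length_atMost) simp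

lemma hit_prob_0: "hit_prob up down 0 = 1"
  by (simp add: hit_prob_def hit_paths_0 path_prob_def)

lemma exp_hit_time_0: "exp_hit_time up down 0 = 0"
  by (simp add: exp_hit_time_def hit_prob_0 hit_paths_0 path_time_def)

lemma hit_prob_le_1: "hit_prob up down x \<le> 1"
  unfolding hit_prob_eq_SUP by (rule SUP_least) (rule weighted_hit_prob_atMost_le_1)

lemma hit_prob_less_top: "hit_prob up down x < top"
  using hit_prob_le_1 by (rule le_less_trans) simp

lemma exp_hit_time_le_Lyapunov:
  assumes "hit_prob up down x = 1"
    and "\<And>y. 0 \<le> U y"
    and "\<And>y. y \<noteq> 0 \<Longrightarrow> 1 + up y * (U (Suc y) - U y) + down y * (U (y - 1) - U y) \<le> 0"
  shows "exp_hit_time up down x \<le> ennreal (U x)"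
  unfolding exp_hit_time_eq_SUP assms(1)
  using weighted_hit_time_atMost_le_Lyapunov[OF assms(2,3)] by (simp add: SUP_least)

lemma hit_prob_step:
  assumes "x \<noteq> 0"
  shows "hit_prob up down x = ennreal (jump_prob up down x (Suc x)) * hit_prob up down (Suc x)
                            + ennreal (jump_prob up down x (x - 1)) * hit_prob up down (x - 1)"
  using weighted_hit_prob_step[OF assms, of "\<lambda>_. 1"] by (simp add: hit_prob_eq_weighted comp_def)

lemma exp_hit_time_step:
  assumes "\<And>y. hit_prob up down y = 1" and "x \<noteq> 0"
  shows "exp_hit_time up down x =
           ennreal (jump_prob up down x (Suc x)) * (ennreal (1 / (up x + down x)) + exp_hit_time up down (Suc x))
         + ennreal (jump_prob up down x (x - 1)) * (ennreal (1 / (up x + down x)) + exp_hit_time up down (x - 1))"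
proof -
  have "exp_hit_time up down = weighted_hit_time (\<lambda>_. 1)"
    using assms(1) by (simp add: fun_eq_iff exp_hit_time_def weighted_hit_time_def)
  then show ?thesis
    using weighted_hit_time_step[OF assms(2), of "\<lambda>_. 1"] assms(1)
    by (simp add: hit_prob_eq_weighted comp_def)
qed

definition hit_probability :: "nat \<Rightarrow> real" where
  "hit_probability x = enn2real (hit_prob up down x)"

definition mean_hit_time :: "nat \<Rightarrow> real" where
  "mean_hit_time x = enn2real (exp_hit_time up down x)"

lemma hit_probability_harmonic:
  assumes "x \<noteq> 0" and "0 < up x + down x"
  shows "up x * (hit_probability (Suc x) - hit_probability x)
         + down x * (hit_probability (x - 1) - hit_probability x) = 0"
proof -
  let ?p = hit_probability
  have "?p x = jump_prob up down x (Suc x) * (0 + ?p (Suc x)) + jump_prob up down x (x - 1) * (0 + ?p (x - 1))"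
    unfolding hit_probability_def
    by (subst hit_prob_step[OF assms(1)], subst enn2real_linear_combination)
       (auto simp: jump_prob_nonneg hit_prob_less_top)
  also have "\<dots> = ?p x + (0 * (up x + down x) + up x * (?p (Suc x) - ?p x)
                                 + down x * (?p (x - 1) - ?p x)) / (up x + down x)"
    by (rule jump_prob_drift[OF assms])
  finally have "(up x * (?p (Suc x) - ?p x) + down x * (?p (x - 1) - ?p x)) / (up x + down x) = 0"
    by simp
  then show ?thesis
    using assms(2) by simp
qed

lemma mean_hit_time_Poisson:
  assumes "\<And>y. hit_prob up down y = 1" and "\<And>y. exp_hit_time up down y < top"
    and "x \<noteq> 0" and "0 < up x + down x"
  shows "1 + up x * (mean_hit_time (Suc x) - mean_hit_time x)
           + down x * (mean_hit_time (x - 1) - mean_hit_time x) = 0"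
proof -
  let ?m = mean_hit_time and ?c = "1 / (up x + down x)"
  have "?m x = jump_prob up down x (Suc x) * (?c + ?m (Suc x)) + jump_prob up down x (x - 1) * (?c + ?m (x - 1))"
    unfolding mean_hit_time_def
    using assms(2) assms(4)
    by (subst exp_hit_time_step[OF assms(1,3)], subst enn2real_linear_combination)
       (auto simp: jump_prob_nonneg enn2real_plus)
  also have "\<dots> = ?m x + (?c * (up x + down x) + up x * (?m (Suc x) - ?m x)
                                 + down x * (?m (x - 1) - ?m x)) / (up x + down x)"
    by (rule jump_prob_drift[OF assms(3,4)])
  finally have "(?c * (up x + down x) + up x * (?m (Suc x) - ?m x) + down x * (?m (x - 1) - ?m x))
                  / (up x + down x) = 0"
    by simp
  then show ?thesis
    using assms(4) by simp
qed

end

section \<open>Rates n\<gamma>(n) and n\<delta>\<close>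

text \<open>The rate \<theta> out of 0 is irrelevant for hitting 0: it only has to be nonnegative.\<close>

locale linear_birth_death =
  fixes \<theta> \<delta> :: real and \<gamma> :: "nat \<Rightarrow> real"
  assumes theta_nonneg: "0 \<le> \<theta>" and delta_pos: "0 < \<delta>"
    and gamma_pos: "\<And>x. x \<noteq> 0 \<Longrightarrow> 0 < \<gamma> x" and gamma_tendsto_0: "\<gamma> \<longlonglongrightarrow> 0"
begin

sublocale birth_death_rates "bd_up \<theta> \<gamma>" "bd_down \<delta>"
  using theta_nonneg delta_pos gamma_pos
  by unfold_locales (auto simp: bd_up_def bd_down_def less_imp_le)

lemma bd_rates_sum_pos: "x \<noteq> 0 \<Longrightarrow> 0 < bd_up \<theta> \<gamma> x + bd_down \<delta> x"
  using gamma_pos[of x] delta_pos by (auto simp: bd_up_def bd_down_def intro!: add_pos_pos)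

lemma eventually_gamma_le: "0 < \<epsilon> \<Longrightarrow> eventually (\<lambda>x. \<gamma> x \<le> \<epsilon>) sequentially"
  using order_tendstoD(2)[OF gamma_tendsto_0] by (rule eventually_mono) (auto intro: less_imp_le)

lemma bd_generator_eq:
  "x \<noteq> 0 \<Longrightarrow> bd_up \<theta> \<gamma> x * (U (Suc x) - U x) + bd_down \<delta> x * (U (x - 1) - U x)
     = real x * (\<gamma> x * (U (Suc x) - U x) - \<delta> * (U x - U (x - 1)))"
  by (simp add: bd_up_def bd_down_def algebra_simps)

lemma hit_prob_eq_1: "hit_prob (bd_up \<theta> \<gamma>) (bd_down \<delta>) x = 1"
proof -
  let ?p = hit_probability
  have "\<gamma> (Suc y) * (?p (Suc (Suc y)) - ?p (Suc y)) = \<delta> * (?p (Suc y) - ?p y)" for y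
  proof -
    have "real (Suc y) * (\<gamma> (Suc y) * (?p (Suc (Suc y)) - ?p (Suc y)) - \<delta> * (?p (Suc y) - ?p y)) = 0"
      using hit_probability_harmonic[of "Suc y"] bd_rates_sum_pos[of "Suc y"] bd_generator_eq[of "Suc y" ?p]
      by simp
    then show ?thesis by simp
  qed
  then have "incseq ?p"
    using gamma_pos eventually_gamma_le[OF delta_pos]
    by (intro incseq_if_bdd_below_recurrence[where B = 0]) (auto simp: hit_probability_def)
  moreover have "?p 0 = 1"
    by (simp add: hit_probability_def hit_prob_0)
  ultimately have "1 \<le> ?p x"
    using incseqD[of ?p 0 x] by simp
  moreover have "?p x \<le> 1"
    using hit_prob_le_1[of x] by (simp add: hit_probability_def enn2real_leI)
  ultimately show ?thesis
    by (simp add: hit_probability_def)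
qed

text \<open>The increments u(x) = U(x) - U(x - 1) of the Lyapunov function U must satisfy
  1/x + \<gamma>(x) u(x + 1) \<le> \<delta> u(x).  Beyond N, where \<gamma> \<le> \<epsilon>, the choice 1/(x (\<delta> - \<epsilon>)) does;
  below N the inequality (with 1 for 1/x) is solved backwards from N.\<close>

function bd_lyapunov_increment :: "real \<Rightarrow> nat \<Rightarrow> nat \<Rightarrow> real" where
  "bd_lyapunov_increment \<epsilon> N x =
     (if N \<le> x then 1 / (real x * (\<delta> - \<epsilon>))
      else (1 + \<gamma> x * bd_lyapunov_increment \<epsilon> N (Suc x)) / \<delta>)"
  by auto
termination by (relation "Wellfounded.measure (\<lambda>(\<epsilon>, N, x). N - x)") auto

declare bd_lyapunov_increment.simps [simp del]

definition bd_lyapunov :: "real \<Rightarrow> nat \<Rightarrow> nat \<Rightarrow> real" where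
  "bd_lyapunov \<epsilon> N x = (\<Sum>k = 1..x. bd_lyapunov_increment \<epsilon> N k)"

lemma bd_lyapunov_increment_nonneg: "\<epsilon> < \<delta> \<Longrightarrow> x \<noteq> 0 \<Longrightarrow> 0 \<le> bd_lyapunov_increment \<epsilon> N x"
proof (induction \<epsilon> N x rule: bd_lyapunov_increment.induct)
  case (1 \<epsilon> N x)
  then show ?case
    using gamma_pos[of x] delta_pos
    by (subst bd_lyapunov_increment.simps) (auto intro!: divide_nonneg_pos add_nonneg_nonneg)
qed

lemma bd_lyapunov_nonneg: "\<epsilon> < \<delta> \<Longrightarrow> 0 \<le> bd_lyapunov \<epsilon> N x"
  unfolding bd_lyapunov_def by (intro sum_nonneg bd_lyapunov_increment_nonneg) auto

lemma bd_lyapunov_increment_drift: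
  assumes "\<epsilon> < \<delta>" and N: "\<And>y. N \<le> y \<Longrightarrow> \<gamma> y \<le> \<epsilon>" and "x \<noteq> 0"
  shows "1 / real x + \<gamma> x * bd_lyapunov_increment \<epsilon> N (Suc x) \<le> \<delta> * bd_lyapunov_increment \<epsilon> N x"
proof (cases "N \<le> x")
  case True
  have "bd_lyapunov_increment \<epsilon> N (Suc x) \<le> 1 / (real x * (\<delta> - \<epsilon>))"
    using True assms(1,3) by (subst bd_lyapunov_increment.simps) (simp add: frac_le)
  then have "\<gamma> x * bd_lyapunov_increment \<epsilon> N (Suc x) \<le> \<epsilon> * (1 / (real x * (\<delta> - \<epsilon>)))"
    using N[OF True] gamma_pos[OF assms(3)] bd_lyapunov_increment_nonneg[OF assms(1), of "Suc x" N]
    by (intro mult_mono) auto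
  also have "\<dots> = \<delta> * bd_lyapunov_increment \<epsilon> N x - 1 / real x"
    using True assms(1,3) by (subst bd_lyapunov_increment.simps) (simp add: field_simps)
  finally show ?thesis by simp
next
  case False
  then have "\<delta> * bd_lyapunov_increment \<epsilon> N x = 1 + \<gamma> x * bd_lyapunov_increment \<epsilon> N (Suc x)"
    using delta_pos by (subst bd_lyapunov_increment.simps) simp
  moreover have "1 / real x \<le> 1" using assms(3) by simp
  ultimately show ?thesis by linarith
qed

lemma bd_lyapunov_drift:
  assumes "\<epsilon> < \<delta>" and "\<And>y. N \<le> y \<Longrightarrow> \<gamma> y \<le> \<epsilon>" and "x \<noteq> 0"
  shows "1 + bd_up \<theta> \<gamma> x * (bd_lyapunov \<epsilon> N (Suc x) - bd_lyapunov \<epsilon> N x)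
           + bd_down \<delta> x * (bd_lyapunov \<epsilon> N (x - 1) - bd_lyapunov \<epsilon> N x) \<le> 0"
proof -
  let ?U = "bd_lyapunov \<epsilon> N" and ?u = "bd_lyapunov_increment \<epsilon> N"
  have "?U (Suc x) - ?U x = ?u (Suc x)" "?U x - ?U (x - 1) = ?u x"
    using assms(3) by (cases x; simp add: bd_lyapunov_def)+
  then have "bd_up \<theta> \<gamma> x * (?U (Suc x) - ?U x) + bd_down \<delta> x * (?U (x - 1) - ?U x)
      = real x * (\<gamma> x * ?u (Suc x) - \<delta> * ?u x)"
    using bd_generator_eq[OF assms(3), of ?U] by simp
  then have "1 + bd_up \<theta> \<gamma> x * (?U (Suc x) - ?U x) + bd_down \<delta> x * (?U (x - 1) - ?U x)
      = real x * (1 / real x + \<gamma> x * ?u (Suc x) - \<delta> * ?u x)"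
    using assms(3) by (simp add: algebra_simps)
  also have "\<dots> \<le> 0"
    using bd_lyapunov_increment_drift[OF assms] by (simp add: mult_nonneg_nonpos)
  finally show ?thesis .
qed

lemma bd_lyapunov_le_harm:
  assumes "\<epsilon> < \<delta>"
  shows "bd_lyapunov \<epsilon> N n \<le> bd_lyapunov \<epsilon> N N + harm n / (\<delta> - \<epsilon>)"
proof (induction n)
  case 0
  then show ?case using bd_lyapunov_nonneg[OF assms] by (simp add: harm_def bd_lyapunov_def)
next
  case (Suc n)
  show ?case
  proof (cases "Suc n \<le> N")
    case True
    then have "bd_lyapunov \<epsilon> N (Suc n) \<le> bd_lyapunov \<epsilon> N N"
      unfolding bd_lyapunov_def using bd_lyapunov_increment_nonneg[OF assms]
      by (intro sum_mono2) auto
    moreover have "0 \<le> harm (Suc n) / (\<delta> - \<epsilon>)"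
      using assms by (simp add: harm_nonneg)
    ultimately show ?thesis by linarith
  next
    case False
    then have "bd_lyapunov \<epsilon> N (Suc n) = bd_lyapunov \<epsilon> N n + 1 / (real (Suc n) * (\<delta> - \<epsilon>))"
      by (simp add: bd_lyapunov_def bd_lyapunov_increment.simps)
    also have "harm (Suc n) / (\<delta> - \<epsilon>) = harm n / (\<delta> - \<epsilon>) + 1 / (real (Suc n) * (\<delta> - \<epsilon>))"
      by (simp add: harm_Suc add_divide_distrib inverse_eq_divide)
    ultimately show ?thesis using Suc.IH by linarith
  qed
qed

lemma exp_hit_time_le_bd_lyapunov:
  assumes "\<epsilon> < \<delta>" and "\<And>y. N \<le> y \<Longrightarrow> \<gamma> y \<le> \<epsilon>"
  shows "exp_hit_time (bd_up \<theta> \<gamma>) (bd_down \<delta>) x \<le> ennreal (bd_lyapunov \<epsilon> N x)"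
  using hit_prob_eq_1 bd_lyapunov_nonneg[OF assms(1)] bd_lyapunov_drift[OF assms]
  by (rule exp_hit_time_le_Lyapunov)

lemma exp_hit_time_less_top: "exp_hit_time (bd_up \<theta> \<gamma>) (bd_down \<delta>) x < top"
proof -
  obtain N where "\<And>y. N \<le> y \<Longrightarrow> \<gamma> y \<le> \<delta> / 2"
    using eventually_gamma_le[of "\<delta> / 2"] delta_pos by (auto simp: eventually_sequentially)
  then have "exp_hit_time (bd_up \<theta> \<gamma>) (bd_down \<delta>) x \<le> ennreal (bd_lyapunov (\<delta> / 2) N x)"
    using delta_pos by (intro exp_hit_time_le_bd_lyapunov) auto
  then show ?thesis
    by (rule le_less_trans) simp
qed

lemma exp_hit_time_eq_mean: "exp_hit_time (bd_up \<theta> \<gamma>) (bd_down \<delta>) x = ennreal (mean_hit_time x)"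
  using exp_hit_time_less_top by (simp add: mean_hit_time_def ennreal_enn2real less_top)

lemma mean_hit_time_increment: "1 / real (Suc x) \<le> \<delta> * (mean_hit_time (Suc x) - mean_hit_time x)"
proof -
  let ?m = mean_hit_time
  have rec: "\<gamma> (Suc y) * (?m (Suc (Suc y)) - ?m (Suc y)) = \<delta> * (?m (Suc y) - ?m y) - 1 / real (Suc y)" for y
  proof -
    have "1 + real (Suc y) * (\<gamma> (Suc y) * (?m (Suc (Suc y)) - ?m (Suc y)) - \<delta> * (?m (Suc y) - ?m y)) = 0"
      using mean_hit_time_Poisson[OF hit_prob_eq_1 exp_hit_time_less_top, of "Suc y"]
        bd_rates_sum_pos[of "Suc y"] bd_generator_eq[of "Suc y" ?m]
      by simp
    then show ?thesis by (simp add: field_simps)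
  qed
  have "incseq ?m"
    using gamma_pos eventually_gamma_le[OF delta_pos] rec
    by (intro incseq_if_bdd_below_recurrence[where B = 0]) (auto simp: mean_hit_time_def)
  then have "0 \<le> \<gamma> (Suc x) * (?m (Suc (Suc x)) - ?m (Suc x))"
    using gamma_pos[of "Suc x"] by (simp add: incseq_SucD)
  then show ?thesis
    using rec[of x] by simp
qed

lemma harm_le_mean_hit_time: "harm n / \<delta> \<le> mean_hit_time n"
proof (induction n)
  case 0
  then show ?case by (simp add: harm_def mean_hit_time_def exp_hit_time_0)
next
  case (Suc n)
  have "harm (Suc n) / \<delta> = harm n / \<delta> + 1 / real (Suc n) / \<delta>"
    by (simp add: harm_Suc add_divide_distrib inverse_eq_divide)
  also have "\<dots> \<le> mean_hit_time n + (mean_hit_time (Suc n) - mean_hit_time n)"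
    using Suc.IH mean_hit_time_increment[of n] delta_pos
    by (intro add_mono) (simp_all add: divide_le_eq mult_ac)
  finally show ?case by simp
qed

lemma mean_hit_time_le_ln:
  assumes "0 < \<epsilon>" and "\<epsilon> < \<delta>"
  obtains h where "\<And>n. 1 \<le> n \<Longrightarrow> mean_hit_time n \<le> ln (real n) / (\<delta> - \<epsilon>) + h"
proof -
  obtain N where N: "\<And>y. N \<le> y \<Longrightarrow> \<gamma> y \<le> \<epsilon>"
    using eventually_gamma_le[OF assms(1)] by (auto simp: eventually_sequentially)
  have "mean_hit_time n \<le> ln (real n) / (\<delta> - \<epsilon>) + (bd_lyapunov \<epsilon> N N + 1 / (\<delta> - \<epsilon>))"
    if "1 \<le> n" for n
  proof -
    have "ennreal (mean_hit_time n) \<le> ennreal (bd_lyapunov \<epsilon> N n)"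
      unfolding exp_hit_time_eq_mean[symmetric] using assms(2) N by (rule exp_hit_time_le_bd_lyapunov)
    then have "mean_hit_time n \<le> bd_lyapunov \<epsilon> N n"
      using bd_lyapunov_nonneg[OF assms(2)] by (simp add: ennreal_le_iff)
    also have "\<dots> \<le> bd_lyapunov \<epsilon> N N + harm n / (\<delta> - \<epsilon>)"
      by (rule bd_lyapunov_le_harm[OF assms(2)])
    also have "\<dots> \<le> bd_lyapunov \<epsilon> N N + (ln (real n) + 1) / (\<delta> - \<epsilon>)"
      using harm_le_ln_plus_1[OF that] assms(2) by (simp add: divide_right_mono)
    finally show ?thesis by (simp add: add_divide_distrib)
  qed
  then show ?thesis by (rule that)
qed

end

theorem claim6:
  fixes \<gamma> :: "nat \<Rightarrow> real" and \<delta> \<theta> :: real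
  assumes "\<forall>n\<ge>1. \<gamma> n > 0"
    and "\<gamma> \<longlonglongrightarrow> 0"
    and "\<delta> > 0" and "\<theta> > 0"
  shows "\<forall>\<epsilon>. 0 < \<epsilon> \<and> \<epsilon> < \<delta> \<longrightarrow>
           (\<exists>h::real. \<forall>n::nat. n \<ge> 1 \<longrightarrow>
              ennreal (ln (real n + 1) / \<delta>) \<le> exp_hit_time (bd_up \<theta> \<gamma>) (bd_down \<delta>) n \<and>
              exp_hit_time (bd_up \<theta> \<gamma>) (bd_down \<delta>) n \<le> ennreal (ln (real n) / (\<delta> - \<epsilon>) + h))"
proof (intro allI impI, goal_cases)
  case (1 \<epsilon>)
  interpret linear_birth_death \<theta> \<delta> \<gamma>
    using assms by unfold_locales auto
  obtain h where upper: "\<And>n. 1 \<le> n \<Longrightarrow> mean_hit_time n \<le> ln (real n) / (\<delta> - \<epsilon>) + h"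
    using mean_hit_time_le_ln 1 by blast
  have lower: "ln (real n + 1) / \<delta> \<le> mean_hit_time n" for n
    using ln_le_harm[of n] harm_le_mean_hit_time[of n] assms(3)
    by (meson divide_right_mono less_imp_le order_trans)
  show ?case
    using upper lower by (auto simp: exp_hit_time_eq_mean intro!: exI[of _ h] ennreal_leI)
qed

end
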